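(* Let $K$ be a finite set with $|K|=N$, let $\mathcal S$ be a finite collection of nonempty subsets of $K$, let $\mathbf r=\{r^{(S)}:S\in\mathcal S\}$ be an online rule associated to $\mathcal S$, and let $\lambda>1$. Let $y\in\mathbb R^K$ be arbitrary (no probabilistic assumption) and let $\rho$ be any ordering of $K$. Let $\hat y\in\mathbb R^K$ be the output of the aggregation algorithm $\mathcal A(\mathbf r,\mathcal S,\lambda)$ run on $y$ revealed in the order $\rho$, and let $\hat y^{(S)}\in\mathbb R^S$ be the predictions of expert $S$. Then for every $S\in\mathcal S$, $$\sum_{s\in S}(y_s-\hat y_s)^2\le \sum_{s\in S}\big(y_s-\hat y^{(S)}_s\big)^2+8\lambda^2\log\big(e|\mathcal S|\big)+2\|y_S-\Pi_\lambda y_S\|^2+4\lambda^2\sum_{s\in S}\mathbf 1(|y_s|>\lambda).$$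
   Context: An ordering of $K$ is a bijection $\rho:[N]\to K$; write $\rho[a:b]=\{\rho(a),\dots,\rho(b)\}$ (empty if $b<a$). For $A\subset K$ and $z\in\mathbb R^K$, $z_A\in\mathbb R^A$ is the restriction. An online rule $r^{(S)}$ for a set $S$ is a family of measurable maps $r^{(S)}_{U,s}:\mathbb R^U\to\mathbb R$ indexed by $U\subset S$ and $s\in S\setminus U$; an online rule $\mathbf r$ associated to $\mathcal S$ is a choice of such a rule for every $S\in\mathcal S$. Given an ordering $\rho$ and data $y$, expert $S$ predicts at each $\rho(t)\in S$ the value $\hat y^{(S)}_{\rho(t)}=r^{(S)}_{\rho[1:t-1]\cap S,\,\rho(t)}\big(y_{\rho[1:t-1]\cap S}\big)$; this defines $\hat y^{(S)}\in\mathbb R^S$. Truncation: $T_\lambda(x)=\min\{\max\{x,-\lambda\},\lambda\}$, and for a vector $z\in\mathbb R^A$, $(\Pi_\lambda z)_a=T_\lambda(z_a)$ (the $\ell^2$-projection onto the $\ell^\infty$-ball of radius $\lambda$). Aggregation algorithm $\mathcal A(\mathbf r,\mathcal S,\lambda)$: set $\alpha=1/(8\lambda^2)$ and $w_{S,1}=1/|\mathcal S|$ for all $S\in\mathcal S$. For $t=1,\dots,N$: (1) $\rho(t)$ is revealed; (2) the active set is $A_t=\{S\in\mathcal S:\rho(t)\in S \text{ and } \rho(t')\in S\text{ for some }t'<t\}$ if $t>1$, and $A_1=\{S\in\mathcal S:\rho(1)\in S\}$; (3) predict $\hat y_{\rho(t)}=\sum_{S\in A_t}\hat w_{S,t}\,T_\lambda(\hat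 y^{(S)}_{\rho(t)})$ with $\hat w_{S,t}=w_{S,t}/\sum_{S'\in A_t}w_{S',t}$ (an empty sum is $0$); (4) after $y_{\rho(t)}$ is revealed, set $w_{S,t+1}=w_{S,t}$ for $S\notin A_t$ and, for $S\in A_t$, $w_{S,t+1}=\dfrac{w_{S,t}e^{-\alpha\ell_{S,t}}}{\sum_{S'\in A_t}w_{S',t}e^{-\alpha\ell_{S',t}}}\sum_{S'\in A_t}w_{S',t}$, where $\ell_{S,t}=\big(T_\lambda(y_{\rho(t)})-T_\lambda(\hat y^{(S)}_{\rho(t)})\big)^2$. The output is $\hat y=(\hat y_s)_{s\in K}$. *)

theory Defs
  imports "HOL-Analysis.Analysis"
begin

definition trunc :: "real \<Rightarrow> real \<Rightarrow> real" where
  "trunc lam x = min (max x (- lam)) lam"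

text \<open>An online rule for a family of sets: r S U s z is the value of
  the map r^(S)_{U,s} at z, where z is a data vector on U (an element of the
  extensional function space on U).  An ordering rho of K is a bijection
  from {1..card K} to K.\<close>

definition restr :: "('a \<Rightarrow> real) \<Rightarrow> 'a set \<Rightarrow> ('a \<Rightarrow> real)" where
  "restr y A = restrict y A"

definition expert_at ::
  "('a set \<Rightarrow> 'a set \<Rightarrow> 'a \<Rightarrow> ('a \<Rightarrow> real) \<Rightarrow> real) \<Rightarrow> 'a set \<Rightarrow> (nat \<Rightarrow> 'a)
    \<Rightarrow> ('a \<Rightarrow> real) \<Rightarrow> nat \<Rightarrow> real" where
  "expert_at r S rho y t =
     r S (rho ` {1..<t} \<inter> S) (rho t) (restr y (rho ` {1..<t} \<inter> S))"

definition expert_pred ::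
  "('a set \<Rightarrow> 'a set \<Rightarrow> 'a \<Rightarrow> ('a \<Rightarrow> real) \<Rightarrow> real) \<Rightarrow> 'a set \<Rightarrow> nat \<Rightarrow> (nat \<Rightarrow> 'a)
    \<Rightarrow> ('a \<Rightarrow> real) \<Rightarrow> 'a \<Rightarrow> real" where
  "expert_pred r S N rho y s = expert_at r S rho y (the_inv_into {1..N} rho s)"

definition active :: "'a set set \<Rightarrow> (nat \<Rightarrow> 'a) \<Rightarrow> nat \<Rightarrow> 'a set set" where
  "active SS rho t =
     (if t = 1 then {S \<in> SS. rho 1 \<in> S}
      else {S \<in> SS. rho t \<in> S \<and> (\<exists>t'. 1 \<le> t' \<and> t' < t \<and> rho t' \<in> S)})"

definition loss ::
  "('a set \<Rightarrow> 'a set \<Rightarrow> 'a \<Rightarrow> ('a \<Rightarrow> real) \<Rightarrow> real) \<Rightarrow> real \<Rightarrow> (nat \<Rightarrow> 'a)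
    \<Rightarrow> ('a \<Rightarrow> real) \<Rightarrow> 'a set \<Rightarrow> nat \<Rightarrow> real" where
  "loss r lam rho y S t = (trunc lam (y (rho t)) - trunc lam (expert_at r S rho y t))\<^sup>2"

text \<open>Weights: wts r SS lam rho y n S = w_{S, n+1}.\<close>
primrec wts ::
  "('a set \<Rightarrow> 'a set \<Rightarrow> 'a \<Rightarrow> ('a \<Rightarrow> real) \<Rightarrow> real) \<Rightarrow> 'a set set \<Rightarrow> real \<Rightarrow> (nat \<Rightarrow> 'a)
    \<Rightarrow> ('a \<Rightarrow> real) \<Rightarrow> nat \<Rightarrow> 'a set \<Rightarrow> real" where
  "wts r SS lam rho y 0 S = 1 / real (card SS)"
| "wts r SS lam rho y (Suc n) S =
     (let t = Suc n; A = active SS rho t; w = wts r SS lam rho y n;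
          alpha = 1 / (8 * lam\<^sup>2) in
      if S \<notin> A then w S
      else w S * exp (- alpha * loss r lam rho y S t)
             / (\<Sum>S'\<in>A. w S' * exp (- alpha * loss r lam rho y S' t))
             * (\<Sum>S'\<in>A. w S'))"

definition agg_at ::
  "('a set \<Rightarrow> 'a set \<Rightarrow> 'a \<Rightarrow> ('a \<Rightarrow> real) \<Rightarrow> real) \<Rightarrow> 'a set set \<Rightarrow> real \<Rightarrow> (nat \<Rightarrow> 'a)
    \<Rightarrow> ('a \<Rightarrow> real) \<Rightarrow> nat \<Rightarrow> real" where
  "agg_at r SS lam rho y t =
     (let A = active SS rho t; w = wts r SS lam rho y (t - 1) in
      \<Sum>S\<in>A. (w S / (\<Sum>S'\<in>A. w S')) * trunc lam (expert_at r S rho y t))"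

definition aggregate ::
  "('a set \<Rightarrow> 'a set \<Rightarrow> 'a \<Rightarrow> ('a \<Rightarrow> real) \<Rightarrow> real) \<Rightarrow> 'a set set \<Rightarrow> real \<Rightarrow> nat \<Rightarrow> (nat \<Rightarrow> 'a)
    \<Rightarrow> ('a \<Rightarrow> real) \<Rightarrow> 'a \<Rightarrow> real" where
  "aggregate r SS lam N rho y s = agg_at r SS lam rho y (the_inv_into {1..N} rho s)"

end

theory Submission
  imports Defs
begin

text \<open>The aggregated prediction is a convex combination of truncated expert predictions, and
  for \<open>\<alpha> = 1/(8\<lambda>\<^sup>2)\<close> the map \<open>v \<mapsto> exp (-\<alpha> (x - v)\<^sup>2)\<close> is concave on \<open>[-\<lambda>, \<lambda>]\<close>.
  By Jensen the exponential-weights update therefore multiplies the weight of every active expert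
  by at least \<open>exp (\<alpha> (\<ell>(\<hat>y) - \<ell>\<^sub>S))\<close>; since the weights stay a probability vector, the
  accumulated truncated regret of \<open>S\<close> over the times it is active is at most \<open>8\<lambda>\<^sup>2 log |\<S>|\<close>.
  Expert \<open>S\<close> is inactive at most once on its own coordinates (the first visit), costing at most
  \<open>4\<lambda>\<^sup>2\<close>, and passing from truncated to untruncated losses costs the last two terms.\<close>

lemma trunc_abs_le: "0 \<le> lam \<Longrightarrow> \<bar>trunc lam x\<bar> \<le> lam"
  by (auto simp: trunc_def)

lemma trunc_eq_self: "\<bar>x\<bar> \<le> lam \<Longrightarrow> trunc lam x = x"
  by (auto simp: trunc_def)

lemma trunc_diff_sq_le: "0 \<le> lam \<Longrightarrow> (trunc lam a - trunc lam b)\<^sup>2 \<le> (a - b)\<^sup>2"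
proof -
  assume "0 \<le> lam"
  then have "\<bar>trunc lam a - trunc lam b\<bar> \<le> \<bar>a - b\<bar>"
    by (auto simp: trunc_def)
  then show ?thesis
    by (metis abs_ge_zero power2_abs power_mono)
qed

lemma diff_sq_le_4_sq:
  fixes a b lam :: real
  assumes "\<bar>a\<bar> \<le> lam" "\<bar>b\<bar> \<le> lam"
  shows "(a - b)\<^sup>2 \<le> 4 * lam\<^sup>2"
proof -
  have "\<bar>a - b\<bar> \<le> 2 * lam"
    using assms by linarith
  then have "\<bar>a - b\<bar>\<^sup>2 \<le> (2 * lam)\<^sup>2"
    by (rule power_mono) simp
  then show ?thesis
    by (simp add: power_mult_distrib)
qed

lemma sq_err_le_trunc_decomposition:
  fixes lam v p e :: real
  assumes "0 < lam" "\<bar>p\<bar> \<le> lam"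
  shows "(v - p)\<^sup>2 \<le> (v - e)\<^sup>2 + ((trunc lam v - p)\<^sup>2 - (trunc lam v - trunc lam e)\<^sup>2)
          + 2 * (v - trunc lam v)\<^sup>2 + 4 * lam\<^sup>2 * of_bool (\<bar>v\<bar> > lam)"
proof -
  have expert: "(trunc lam v - trunc lam e)\<^sup>2 \<le> (v - e)\<^sup>2"
    using trunc_diff_sq_le assms by simp
  have "(v - p)\<^sup>2 \<le> (trunc lam v - p)\<^sup>2 + 2 * (v - trunc lam v)\<^sup>2
          + 4 * lam\<^sup>2 * of_bool (\<bar>v\<bar> > lam)"
  proof (cases "\<bar>v\<bar> > lam")
    case False
    then show ?thesis
      by (simp add: trunc_eq_self)
  next
    case True
    define d u where "d = v - trunc lam v" and "u = trunc lam v - p"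
    have "u\<^sup>2 \<le> 4 * lam\<^sup>2"
      unfolding u_def using assms by (intro diff_sq_le_4_sq trunc_abs_le) auto
    moreover have "2 * d * u \<le> d\<^sup>2 + u\<^sup>2"
      using zero_le_power2[of "d - u"] by (simp add: power2_diff)
    ultimately have "(d + u)\<^sup>2 \<le> u\<^sup>2 + 2 * d\<^sup>2 + 4 * lam\<^sup>2"
      by (simp add: power2_sum)
    then show ?thesis
      using True by (simp add: d_def u_def)
  qed
  with expert show ?thesis
    by linarith
qed

lemma abs_weighted_mean_le:
  fixes w a :: "'b \<Rightarrow> real"
  assumes "finite A" "\<forall>i\<in>A. 0 \<le> w i" "\<forall>i\<in>A. \<bar>a i\<bar> \<le> lam" "0 \<le> lam"
  shows "\<bar>\<Sum>i\<in>A. w i / (\<Sum>j\<in>A. w j) * a i\<bar> \<le> lam"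
proof -
  define W where "W = (\<Sum>j\<in>A. w j)"
  have "W \<ge> 0"
    unfolding W_def using assms(2) by (simp add: sum_nonneg)
  have "\<bar>\<Sum>i\<in>A. w i / W * a i\<bar> \<le> (\<Sum>i\<in>A. w i / W * \<bar>a i\<bar>)"
    using sum_abs[of "\<lambda>i. w i / W * a i" A] assms(2) \<open>W \<ge> 0\<close> by (simp add: abs_mult)
  also have "\<dots> \<le> (\<Sum>i\<in>A. w i / W * lam)"
    using assms(2,3) \<open>W \<ge> 0\<close> by (intro sum_mono mult_left_mono) auto
  also have "\<dots> = W / W * lam"
    unfolding W_def by (simp only: sum_distrib_right sum_divide_distrib)
  also have "\<dots> \<le> lam"
    using assms(4) by (cases "W = 0") auto
  finally show ?thesis
    unfolding W_def .
qed

lemma concave_on_exp_neg_sq: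
  fixes c x lam :: real
  assumes "0 \<le> c" "8 * c * lam\<^sup>2 \<le> 1" "\<bar>x\<bar> \<le> lam"
  shows "concave_on {-lam..lam} (\<lambda>v. exp (- c * (x - v)\<^sup>2))"
proof -
  have "convex_on {-lam..lam} (\<lambda>v. - exp (- c * (x - v)\<^sup>2))"
  proof (rule f''_ge0_imp_convex)
    show "DERIV (\<lambda>v. - exp (- c * (x - v)\<^sup>2)) v :> - (2 * c * (x - v)) * exp (- c * (x - v)\<^sup>2)"
      for v
      by (rule derivative_eq_intros refl | simp add: power2_eq_square algebra_simps)+
    show "DERIV (\<lambda>v. - (2 * c * (x - v)) * exp (- c * (x - v)\<^sup>2)) v
            :> 2 * c * exp (- c * (x - v)\<^sup>2) * (1 - 2 * c * (x - v)\<^sup>2)" for v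
      by (rule derivative_eq_intros refl | simp add: power2_eq_square algebra_simps)+
    fix v
    assume "v \<in> {-lam..lam}"
    then have "(x - v)\<^sup>2 \<le> 4 * lam\<^sup>2"
      using assms(3) by (intro diff_sq_le_4_sq) auto
    then have "2 * c * (x - v)\<^sup>2 \<le> 1"
      using assms(1,2) mult_left_mono[of "(x - v)\<^sup>2" "4 * lam\<^sup>2" "2 * c"] by linarith
    then show "0 \<le> 2 * c * exp (- c * (x - v)\<^sup>2) * (1 - 2 * c * (x - v)\<^sup>2)"
      using assms(1) by simp
  qed simp
  then show ?thesis
    by (simp add: concave_on_def)
qed

lemma exp_neg_sq_jensen:
  fixes q a :: "'b \<Rightarrow> real"
  assumes "finite A" "A \<noteq> {}" "\<forall>i\<in>A. 0 \<le> q i" "sum q A = 1"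
    and "\<forall>i\<in>A. \<bar>a i\<bar> \<le> lam" "\<bar>x\<bar> \<le> lam" "0 \<le> c" "8 * c * lam\<^sup>2 \<le> 1"
  shows "(\<Sum>i\<in>A. q i * exp (- c * (x - a i)\<^sup>2)) \<le> exp (- c * (x - (\<Sum>i\<in>A. q i * a i))\<^sup>2)"
proof -
  have "a i \<in> {-lam..lam}" if "i \<in> A" for i
    using assms(5) that by (auto simp: abs_le_iff)
  then show ?thesis
    using concave_on_sum[OF assms(1,2) concave_on_exp_neg_sq[OF assms(7,8,6)] assms(4), of a]
      assms(3) by simp
qed

lemma card_inactive_visits_le_1:
  assumes "S \<in> SS"
  shows "card {t\<in>{1..n}. rho t \<in> S \<and> S \<notin> active SS rho t} \<le> 1"
proof -
  let ?I = "{t\<in>{1..n}. rho t \<in> S \<and> S \<notin> active SS rho t}"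
  have no_earlier_visit: "rho t' \<notin> S" if "t \<in> ?I" "1 \<le> t'" "t' < t" for t t'
    using that assms unfolding active_def by (auto split: if_splits)
  have "a = b" if "a \<in> ?I" "b \<in> ?I" for a b
    using no_earlier_visit[OF that(1), of b] no_earlier_visit[OF that(2), of a] that
    by (cases a b rule: linorder_cases) auto
  then show ?thesis
    by (simp add: card_le_Suc0_iff_eq)
qed

lemma sum_the_inv_into_ordering:
  assumes rho: "bij_betw rho {1..N} K" and "S \<subseteq> K"
  shows "(\<Sum>s\<in>S. f (the_inv_into {1..N} rho s)) = (\<Sum>t\<in>{t\<in>{1..N}. rho t \<in> S}. f t)"
proof -
  have "rho ` {t\<in>{1..N}. rho t \<in> S} = S"
    using \<open>S \<subseteq> K\<close> bij_betw_imp_surj_on[OF rho] by blast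
  then have "bij_betw rho {t\<in>{1..N}. rho t \<in> S} S"
    by (intro bij_betw_subset[OF rho]) auto
  then have "(\<Sum>s\<in>S. f (the_inv_into {1..N} rho s))
      = (\<Sum>t\<in>{t\<in>{1..N}. rho t \<in> S}. f (the_inv_into {1..N} rho (rho t)))"
    by (rule sum.reindex_bij_betw[symmetric])
  also have "\<dots> = (\<Sum>t\<in>{t\<in>{1..N}. rho t \<in> S}. f t)"
    using bij_betw_imp_inj_on[OF rho] by (intro sum.cong) (auto simp: the_inv_into_f_f)
  finally show ?thesis .
qed

lemma visited_if_active: "S \<in> active SS rho t \<Longrightarrow> rho t \<in> S"
  by (simp add: active_def split: if_splits)

locale aggregation_run =
  fixes r :: "'a set \<Rightarrow> 'a set \<Rightarrow> 'a \<Rightarrow> ('a \<Rightarrow> real) \<Rightarrow> real"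
    and SS :: "'a set set" and lam :: real and rho :: "nat \<Rightarrow> 'a" and y :: "'a \<Rightarrow> real"
  assumes finite_SS: "finite SS" and SS_nonempty: "SS \<noteq> {}" and lam_pos: "0 < lam"
begin

abbreviation w :: "nat \<Rightarrow> 'a set \<Rightarrow> real" where
  "w \<equiv> wts r SS lam rho y"

abbreviation alpha :: real where
  "alpha \<equiv> 1 / (8 * lam\<^sup>2)"

definition regret :: "'a set \<Rightarrow> nat \<Rightarrow> real" where
  "regret S t = (trunc lam (y (rho t)) - agg_at r SS lam rho y t)\<^sup>2 - loss r lam rho y S t"

lemma active_subset: "active SS rho t \<subseteq> SS"
  by (auto simp: active_def)

lemma finite_active: "finite (active SS rho t)"
  using active_subset finite_SS by (rule finite_subset)

lemma wts_pos: "S \<in> SS \<Longrightarrow> 0 < w n S"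
proof (induction n arbitrary: S)
  case 0
  then show ?case
    using finite_SS by (auto simp: card_gt_0_iff)
next
  case (Suc n)
  let ?A = "active SS rho (Suc n)"
  have "0 < (\<Sum>S'\<in>?A. w n S' * exp (- alpha * loss r lam rho y S' (Suc n)))"
    and "0 < (\<Sum>S'\<in>?A. w n S')" if "S \<in> ?A"
    using that Suc.IH active_subset
    by (auto intro!: sum_pos[OF finite_active] mult_pos_pos)
  with Suc show ?case
    by (auto simp: Let_def)
qed

lemma sum_active_wts_Suc:
  "(\<Sum>S\<in>active SS rho (Suc n). w (Suc n) S) = (\<Sum>S\<in>active SS rho (Suc n). w n S)"
proof -
  let ?A = "active SS rho (Suc n)"
  define Z where "Z = (\<Sum>S'\<in>?A. w n S' * exp (- alpha * loss r lam rho y S' (Suc n)))"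
  define W where "W = (\<Sum>S'\<in>?A. w n S')"
  have "w (Suc n) S = w n S * exp (- alpha * loss r lam rho y S (Suc n)) / Z * W" if "S \<in> ?A" for S
    using that by (simp add: Let_def Z_def W_def)
  then have "(\<Sum>S\<in>?A. w (Suc n) S) = (\<Sum>S\<in>?A. w n S * exp (- alpha * loss r lam rho y S (Suc n)) / Z * W)"
    by (rule sum.cong[OF refl])
  also have "\<dots> = Z / Z * W"
    unfolding Z_def by (simp only: sum_distrib_right sum_divide_distrib)
  also have "\<dots> = W"
  proof (cases "?A = {}")
    case False
    then have "0 < Z"
      unfolding Z_def using wts_pos active_subset
      by (auto intro!: sum_pos[OF finite_active] mult_pos_pos)
    then show ?thesis
      by simp
  qed (simp add: W_def)
  finally show ?thesis
    unfolding W_def .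
qed

lemma wts_sum: "(\<Sum>S\<in>SS. w n S) = 1"
proof (induction n)
  case 0
  then show ?case
    using finite_SS SS_nonempty by simp
next
  case (Suc n)
  let ?A = "active SS rho (Suc n)"
  have "(\<Sum>S\<in>SS. w (Suc n) S) = (\<Sum>S\<in>SS - ?A. w (Suc n) S) + (\<Sum>S\<in>?A. w (Suc n) S)"
    using sum.subset_diff[OF active_subset finite_SS] .
  also have "\<dots> = (\<Sum>S\<in>SS - ?A. w n S) + (\<Sum>S\<in>?A. w n S)"
    unfolding sum_active_wts_Suc by (simp add: Let_def)
  also have "\<dots> = (\<Sum>S\<in>SS. w n S)"
    using sum.subset_diff[OF active_subset finite_SS, symmetric] .
  finally show ?case
    using Suc.IH by simp
qed

lemma wts_le_1: "S \<in> SS \<Longrightarrow> w n S \<le> 1"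
  using member_le_sum[OF _ _ finite_SS, of S "w n"] wts_sum by (simp add: less_imp_le wts_pos)

lemma agg_at_abs_le: "\<bar>agg_at r SS lam rho y t\<bar> \<le> lam"
  unfolding agg_at_def Let_def
  using active_subset lam_pos
  by (intro abs_weighted_mean_le finite_active) (auto intro!: less_imp_le[OF wts_pos] trunc_abs_le)

lemma wts_Suc_ge:
  assumes "S \<in> active SS rho (Suc n)"
  shows "w n S * exp (alpha * regret S (Suc n)) \<le> w (Suc n) S"
proof -
  let ?A = "active SS rho (Suc n)"
  define x where "x = trunc lam (y (rho (Suc n)))"
  define a where "a S' = trunc lam (expert_at r S' rho y (Suc n))" for S'
  define p where "p = agg_at r SS lam rho y (Suc n)"
  define Z where "Z = (\<Sum>S'\<in>?A. w n S' * exp (- alpha * (x - a S')\<^sup>2))"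
  define W where "W = (\<Sum>S'\<in>?A. w n S')"
  have A_ne: "?A \<noteq> {}"
    using assms by auto
  have w_pos: "\<forall>S'\<in>?A. 0 < w n S'"
    using active_subset wts_pos by blast
  have "0 < Z" "0 < W"
    unfolding Z_def W_def using w_pos by (auto intro!: sum_pos[OF finite_active A_ne])
  have p_eq: "p = (\<Sum>S'\<in>?A. w n S' / W * a S')"
    by (simp add: p_def agg_at_def W_def a_def Let_def)
  have "Z / W = (\<Sum>S'\<in>?A. w n S' / W * exp (- alpha * (x - a S')\<^sup>2))"
    unfolding Z_def by (simp add: sum_divide_distrib)
  also have "\<dots> \<le> exp (- alpha * (x - p)\<^sup>2)"
    unfolding p_eq
  proof (rule exp_neg_sq_jensen[OF finite_active A_ne])
    show "\<forall>S'\<in>?A. 0 \<le> w n S' / W"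
      using w_pos \<open>0 < W\<close> by (simp add: less_imp_le)
    show "(\<Sum>S'\<in>?A. w n S' / W) = 1"
      using \<open>0 < W\<close> by (simp add: W_def flip: sum_divide_distrib)
  qed (use lam_pos in \<open>auto simp: x_def a_def intro: trunc_abs_le\<close>)
  finally have exp_le: "exp (alpha * (x - p)\<^sup>2) \<le> W / Z"
    using \<open>0 < Z\<close> \<open>0 < W\<close> by (simp add: field_simps exp_minus_inverse exp_minus)
  have "w n S * exp (alpha * regret S (Suc n))
      = w n S * exp (- alpha * (x - a S)\<^sup>2) * exp (alpha * (x - p)\<^sup>2)"
    by (simp add: regret_def loss_def x_def a_def p_def algebra_simps flip: exp_add)
  also have "\<dots> \<le> w n S * exp (- alpha * (x - a S)\<^sup>2) * (W / Z)"
    using exp_le w_pos assms by (intro mult_left_mono) (auto intro: less_imp_le)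
  also have "\<dots> = w (Suc n) S"
    using assms by (simp add: Let_def Z_def W_def loss_def x_def a_def)
  finally show ?thesis .
qed

lemma wts_lower_bound:
  assumes "S \<in> SS"
  shows "exp (alpha * (\<Sum>t\<in>{t\<in>{1..n}. S \<in> active SS rho t}. regret S t)) / card SS \<le> w n S"
proof (induction n)
  case 0
  then show ?case
    by simp
next
  case (Suc n)
  let ?R = "\<lambda>n. \<Sum>t\<in>{t\<in>{1..n}. S \<in> active SS rho t}. regret S t"
  show ?case
  proof (cases "S \<in> active SS rho (Suc n)")
    case True
    have "{t\<in>{1..Suc n}. S \<in> active SS rho t} = insert (Suc n) {t\<in>{1..n}. S \<in> active SS rho t}"
      using True by (auto simp: le_Suc_eq)
    then have "exp (alpha * ?R (Suc n)) / card SS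
        = exp (alpha * ?R n) / card SS * exp (alpha * regret S (Suc n))"
      by (simp add: algebra_simps flip: exp_add)
    also have "\<dots> \<le> w n S * exp (alpha * regret S (Suc n))"
      using Suc.IH by (rule mult_right_mono) simp
    also have "\<dots> \<le> w (Suc n) S"
      using True by (rule wts_Suc_ge)
    finally show ?thesis .
  next
    case False
    then have "{t\<in>{1..Suc n}. S \<in> active SS rho t} = {t\<in>{1..n}. S \<in> active SS rho t}"
      by (auto simp: le_Suc_eq)
    with False Suc.IH show ?thesis
      by (simp add: Let_def)
  qed
qed

lemma active_regret_le:
  assumes "S \<in> SS"
  shows "(\<Sum>t\<in>{t\<in>{1..n}. S \<in> active SS rho t}. regret S t) \<le> 8 * lam\<^sup>2 * ln (card SS)"
proof -
  let ?R = "\<Sum>t\<in>{t\<in>{1..n}. S \<in> active SS rho t}. regret S t"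
  have card_pos: "0 < real (card SS)"
    using assms finite_SS by (auto simp: card_gt_0_iff)
  have "exp (alpha * ?R) / card SS \<le> 1"
    using wts_lower_bound[OF assms] wts_le_1[OF assms] by (rule order_trans)
  then have "exp (alpha * ?R) \<le> card SS"
    using card_pos by (simp add: divide_le_eq)
  then have "alpha * ?R \<le> ln (card SS)"
    using card_pos by (simp add: ln_ge_iff)
  then show ?thesis
    using lam_pos by (simp add: field_simps)
qed

lemma regret_le: "regret S t \<le> 4 * lam\<^sup>2"
proof -
  have "(trunc lam (y (rho t)) - agg_at r SS lam rho y t)\<^sup>2 \<le> 4 * lam\<^sup>2"
    using lam_pos by (intro diff_sq_le_4_sq trunc_abs_le agg_at_abs_le) simp
  then show ?thesis
    unfolding regret_def loss_def by (smt (verit) zero_le_power2)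
qed

lemma visit_regret_le:
  assumes "S \<in> SS"
  shows "(\<Sum>t\<in>{t\<in>{1..n}. rho t \<in> S}. regret S t) \<le> 8 * lam\<^sup>2 * ln (exp 1 * card SS)"
proof -
  let ?act = "{t\<in>{1..n}. S \<in> active SS rho t}"
  let ?inact = "{t\<in>{1..n}. rho t \<in> S \<and> S \<notin> active SS rho t}"
  have "{t\<in>{1..n}. rho t \<in> S} = ?act \<union> ?inact"
    using visited_if_active by blast
  then have split: "(\<Sum>t\<in>{t\<in>{1..n}. rho t \<in> S}. regret S t)
      = (\<Sum>t\<in>?act. regret S t) + (\<Sum>t\<in>?inact. regret S t)"
    by (simp add: sum.union_disjoint disjoint_iff)
  have "(\<Sum>t\<in>?inact. regret S t) \<le> card ?inact * (4 * lam\<^sup>2)"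
    using regret_le by (rule sum_bounded_above)
  also have "\<dots> \<le> 1 * (4 * lam\<^sup>2)"
    using card_inactive_visits_le_1[OF assms, of n rho] by (intro mult_right_mono) auto
  finally have inact: "(\<Sum>t\<in>?inact. regret S t) \<le> 8 * lam\<^sup>2"
    using zero_le_power2[of lam] by linarith
  have "ln (exp 1 * card SS) = 1 + ln (card SS)"
    using SS_nonempty finite_SS by (simp add: ln_mult card_gt_0_iff)
  then show ?thesis
    using split inact active_regret_le[OF assms, of n] by (simp add: algebra_simps)
qed

lemma sq_err_le_at:
  "(y (rho t) - agg_at r SS lam rho y t)\<^sup>2
     \<le> (y (rho t) - expert_at r S rho y t)\<^sup>2 + regret S t
       + 2 * (y (rho t) - trunc lam (y (rho t)))\<^sup>2 + 4 * lam\<^sup>2 * of_bool (\<bar>y (rho t)\<bar> > lam)"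
  using sq_err_le_trunc_decomposition[OF lam_pos agg_at_abs_le]
  by (simp add: regret_def loss_def)

end

theorem mainTheorem1:
  fixes K :: "'a set" and SS :: "'a set set"
    and r :: "'a set \<Rightarrow> 'a set \<Rightarrow> 'a \<Rightarrow> ('a \<Rightarrow> real) \<Rightarrow> real"
    and lam :: real and y :: "'a \<Rightarrow> real" and rho :: "nat \<Rightarrow> 'a"
  assumes "finite K"
    and "finite SS"
    and "\<forall>S\<in>SS. S \<noteq> {} \<and> S \<subseteq> K"
    and "\<forall>S\<in>SS. \<forall>U. U \<subseteq> S \<longrightarrow> (\<forall>s\<in>S - U.
            r S U s \<in> borel_measurable (PiM U (\<lambda>_. borel)))"
    and "lam > 1"
    and "bij_betw rho {1..card K} K"
    and "S \<in> SS"
  shows "(\<Sum>s\<in>S. (y s - aggregate r SS lam (card K) rho y s)\<^sup>2)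
         \<le> (\<Sum>s\<in>S. (y s - expert_pred r S (card K) rho y s)\<^sup>2)
            + 8 * lam\<^sup>2 * ln (exp 1 * real (card SS))
            + 2 * (\<Sum>s\<in>S. (y s - trunc lam (y s))\<^sup>2)
            + 4 * lam\<^sup>2 * (\<Sum>s\<in>S. of_bool (\<bar>y s\<bar> > lam))"
proof -
  \<comment> \<open>The bound holds for every data vector.\<close>
  interpret aggregation_run r SS lam rho y
    using assms(2,5,7) by unfold_locales auto
  define tau where "tau s = the_inv_into {1..card K} rho s" for s
  have S_sub: "S \<subseteq> K"
    using assms(3,7) by blast
  have "(y s - aggregate r SS lam (card K) rho y s)\<^sup>2
      \<le> (y s - expert_pred r S (card K) rho y s)\<^sup>2 + regret S (tau s)
        + 2 * (y s - trunc lam (y s))\<^sup>2 + 4 * lam\<^sup>2 * of_bool (\<bar>y s\<bar> > lam)" if "s \<in> S" for s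
    using sq_err_le_at[of "tau s" S] f_the_inv_into_f_bij_betw[OF assms(6)] that S_sub
    by (auto simp: aggregate_def expert_pred_def tau_def)
  then have "(\<Sum>s\<in>S. (y s - aggregate r SS lam (card K) rho y s)\<^sup>2)
      \<le> (\<Sum>s\<in>S. (y s - expert_pred r S (card K) rho y s)\<^sup>2) + (\<Sum>s\<in>S. regret S (tau s))
        + 2 * (\<Sum>s\<in>S. (y s - trunc lam (y s))\<^sup>2) + 4 * lam\<^sup>2 * (\<Sum>s\<in>S. of_bool (\<bar>y s\<bar> > lam))"
    by (subst sum_distrib_left)+ (simp add: sum_mono flip: sum.distrib)
  moreover have "(\<Sum>s\<in>S. regret S (tau s)) \<le> 8 * lam\<^sup>2 * ln (exp 1 * real (card SS))"
    unfolding tau_def sum_the_inv_into_ordering[OF assms(6) S_sub]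
    using visit_regret_le[OF assms(7)] .
  ultimately show ?thesis
    by linarith
qed

end
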